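(* Let $X$ and $Y$ be topological vector spaces (over $\mathbb{R}$), let $\theta$ be the origin of $Y$, let $D$ be a nonempty convex subset of $X$, and let $K$ be a nonempty set. Let $F: D\times K \rightrightarrows Y$ and $G: D\times D\rightrightarrows Y$ be set-valued mappings satisfying: (i) for each $y\in K$, the set $\{x\in D: \theta\in F(x,y)\}$ is compactly closed; (ii) $G$ is a KKM-type mapping on $D$; (iii) for each $y\in K$ there exists $z\in D$ such that for all $x\in D$, $\theta\in G(z,x)$ implies $\theta\in F(x,y)$; (iv) there exist a nonempty compact subset $M$ of $D$ and a point $y_0\in K$ such that $\theta\notin F(x,y_0)$ for all $x\in D\setminus M$. Then there exists $\bar x\in M$ such that $\theta\in F(\bar x,y)$ for all $y\in K$.
   Context: A subset $A$ of a topological space $X$ is compactly closed if for every compact subset $M$ of $X$ the set $A\cap M$ is closed in $M$. A set-valued mapping $G: D\times D\rightrightarrows Y$ is called a KKM-type mapping on $D$ if for every finite subset $\{x_1,\dots,x_n\}\subset D$ and every $x\in \operatorname{co}\{x_1,\dots,x_n\}\cap D$ there exists $j\in\{1,\dots,n\}$ such that $\theta\in G(x_j,x)$. Here $\operatorname{co}$ denotes the convex hull. *)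

theory Defs
  imports "HOL-Analysis.Analysis"
begin

class real_tvs = real_vector + topological_space +
  assumes tvs_add_continuous:
    "((\<lambda>p. fst p + snd p) \<longlongrightarrow> x + y) (nhds x \<times>\<^sub>F nhds y)"
  assumes tvs_scaleR_continuous:
    "((\<lambda>p. fst p *\<^sub>R snd p) \<longlongrightarrow> c *\<^sub>R x) (nhds c \<times>\<^sub>F nhds x)"

definition compactly_closed :: "'a::topological_space set \<Rightarrow> bool" where
  "compactly_closed A \<longleftrightarrow> (\<forall>M. compact M \<longrightarrow> closedin (top_of_set M) (A \<inter> M))"

definition KKM_type :: "('a::real_vector \<Rightarrow> 'a \<Rightarrow> 'y::zero set) \<Rightarrow> 'a set \<Rightarrow> bool" where
  "KKM_type G D \<longleftrightarrow>
     (\<forall>S. finite S \<and> S \<noteq> {} \<and> S \<subseteq> D \<longrightarrow>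
        (\<forall>x \<in> convex hull S \<inter> D. \<exists>xj \<in> S. (0::'y) \<in> G xj x))"

end

theory Submission
  imports Defs "HOL-Homology.Homology"
begin

(* The sets A y = {x \<in> D. 0 \<in> F x y} are compactly closed, and (ii) together with (iii) says
   that the convex hull of finitely many of the points z y lies in the union of the corresponding
   A y. By the KKM lemma in a topological vector space (obtained from the KKM lemma on a standard
   simplex, hence from Brouwer's fixed point theorem, hence from the non-contractibility of
   spheres) the A y have the finite intersection property. By (iv) every finite intersection
   involving A y0 lies in the compact set M, so all A y meet in M. *)

lemma homotopic_with_canon_by_homotopy:
  fixes H :: "real \<times> 'a::topological_space \<Rightarrow> 'b::topological_space"
  assumes "continuous_on ({0..1} \<times> S) H" "H ` ({0..1} \<times> S) \<subseteq> T"
    and "\<And>x. x \<in> S \<Longrightarrow> H (0, x) = f x" "\<And>x. x \<in> S \<Longrightarrow> H (1, x) = g x"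
  shows "homotopic_with_canon (\<lambda>_. True) S T f g"
proof -
  have "\<exists>h. continuous_on ({0..1::real} \<times> S) h \<and> h \<in> {0..1} \<times> S \<rightarrow> T \<and>
      (\<forall>x\<in>S. h (0, x) = f x) \<and> (\<forall>x\<in>S. h (1, x) = g x)"
    using assms by (intro exI[of _ H]) (auto simp: image_subset_iff)
  then show ?thesis by (subst homotopic_with) auto
qed

definition nat_ball :: "nat \<Rightarrow> (nat \<Rightarrow> real) set" where
  "nat_ball p = {x. (\<Sum>i\<le>p. (x i)\<^sup>2) \<le> 1 \<and> (\<forall>i>p. x i = 0)}"

definition nat_sphere :: "nat \<Rightarrow> (nat \<Rightarrow> real) set" where
  "nat_sphere p = {x. (\<Sum>i\<le>p. (x i)\<^sup>2) = 1 \<and> (\<forall>i>p. x i = 0)}"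

lemma nsphere_eq_top_of_nat_sphere: "nsphere p = top_of_set (nat_sphere p)"
  by (simp add: nsphere nat_sphere_def euclidean_product_topology)

lemma nat_sphere_subset_nat_ball: "nat_sphere p \<subseteq> nat_ball p"
  by (auto simp: nat_sphere_def nat_ball_def)

lemma continuous_on_snd_coordinate: "continuous_on S (\<lambda>z. snd z i :: real)"
  by (rule continuous_on_product_then_coordinatewise[OF continuous_on_snd[OF continuous_on_id]])

lemma contractible_nat_ball: "contractible (nat_ball p)"
proof -
  define H where "H z = (\<lambda>i. (1 - fst z) * snd z i)" for z :: "real \<times> (nat \<Rightarrow> real)"
  have "H (t, x) \<in> nat_ball p" if "t \<in> {0..1}" "x \<in> nat_ball p" for t x
  proof -
    have "(\<Sum>i\<le>p. ((1 - t) * x i)\<^sup>2) = (1 - t)\<^sup>2 * (\<Sum>i\<le>p. (x i)\<^sup>2)"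
      by (simp add: power_mult_distrib sum_distrib_left)
    also have "\<dots> \<le> 1 * 1"
      using that by (intro mult_mono) (auto simp: nat_ball_def abs_square_le_1 intro: sum_nonneg)
    finally show ?thesis using that by (simp add: H_def nat_ball_def)
  qed
  then have "H ` ({0..1} \<times> nat_ball p) \<subseteq> nat_ball p" by auto
  moreover have "continuous_on ({0..1} \<times> nat_ball p) H"
    unfolding H_def by (intro continuous_intros continuous_on_snd_coordinate)
  ultimately have "homotopic_with_canon (\<lambda>_. True) (nat_ball p) (nat_ball p) id (\<lambda>_ _. 0)"
    by (intro homotopic_with_canon_by_homotopy[where H = H]) (auto simp: H_def nat_ball_def)
  then show ?thesis unfolding contractible_def by blast
qed

lemma nat_sphere_scaled_eq:
  assumes x: "x \<in> nat_sphere p" and y: "y \<in> nat_ball p" and t: "0 \<le> t" "t \<le> 1"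
    and xy: "x = (\<lambda>i. t * y i)"
  shows "x = y"
proof -
  have "1 = (\<Sum>i\<le>p. (x i)\<^sup>2)" using x by (simp add: nat_sphere_def)
  also have "\<dots> = t\<^sup>2 * (\<Sum>i\<le>p. (y i)\<^sup>2)"
    by (simp add: xy power_mult_distrib sum_distrib_left)
  also have "\<dots> \<le> t\<^sup>2" using y by (intro mult_left_le) (auto simp: nat_ball_def)
  finally have "t = 1" using t by (smt (verit) mult_left_le power2_eq_square)
  then show ?thesis using xy by simp
qed

lemma sum_sq_diff_scaled_pos:
  assumes x: "x \<in> nat_ball p" and y: "y \<in> nat_ball p" "y \<noteq> x" and t: "0 \<le> t" "t \<le> 1"
    and t_x: "t = 1 \<or> x \<in> nat_sphere p"
  shows "(\<Sum>i\<le>p. (x i - t * y i)\<^sup>2) > 0"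
proof -
  have "(\<Sum>i\<le>p. (x i - t * y i)\<^sup>2) \<noteq> 0"
  proof
    assume "(\<Sum>i\<le>p. (x i - t * y i)\<^sup>2) = 0"
    then have "x i = t * y i" if "i \<le> p" for i
      using that sum_nonneg_eq_0_iff[of "{..p}" "\<lambda>i. (x i - t * y i)\<^sup>2"] by auto
    moreover have "x i = 0" "y i = 0" if "i > p" for i
      using that x y by (auto simp: nat_ball_def)
    ultimately have x_eq: "x = (\<lambda>i. t * y i)"
      by (metis linorder_not_le mult_zero_right)
    have "y = x"
    proof (cases "t = 1")
      case False
      then show ?thesis using nat_sphere_scaled_eq[OF _ y(1) t x_eq] t_x by auto
    qed (use x_eq in auto)
    with y(2) show False ..
  qed
  then show ?thesis by (metis (mono_tags) order_le_neq_trans sum_nonneg zero_le_power2)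
qed

lemma nat_normalize_in_sphere:
  fixes v :: "nat \<Rightarrow> real"
  assumes "(\<Sum>i\<le>p. (v i)\<^sup>2) > 0" "\<forall>i>p. v i = 0"
  shows "(\<lambda>i. v i / sqrt (\<Sum>j\<le>p. (v j)\<^sup>2)) \<in> nat_sphere p"
proof -
  have "(\<Sum>i\<le>p. (v i / sqrt (\<Sum>j\<le>p. (v j)\<^sup>2))\<^sup>2) = (\<Sum>i\<le>p. (v i)\<^sup>2) / (\<Sum>j\<le>p. (v j)\<^sup>2)"
    using assms by (simp add: power_divide flip: sum_divide_distrib)
  then show ?thesis using assms by (simp add: nat_sphere_def)
qed

lemma continuous_on_nat_normalize:
  fixes v :: "'a::topological_space \<Rightarrow> nat \<Rightarrow> real"
  assumes "\<And>i. continuous_on S (\<lambda>x. v x i)" "\<And>x. x \<in> S \<Longrightarrow> (\<Sum>i\<le>p. (v x i)\<^sup>2) > 0"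
  shows "continuous_on S (\<lambda>x i. v x i / sqrt (\<Sum>j\<le>p. (v x j)\<^sup>2))"
  by (intro continuous_intros assms(1) ballI) (metis assms(2) less_irrefl real_sqrt_eq_zero_cancel_iff)

lemma not_homotopic_id_nat_sphere_ball_map:
  assumes "continuous_on (nat_ball p) g" "g \<in> nat_ball p \<rightarrow> nat_sphere p"
  shows "\<not> homotopic_with_canon (\<lambda>_. True) (nat_sphere p) (nat_sphere p) id g"
proof
  assume id_g: "homotopic_with_canon (\<lambda>_. True) (nat_sphere p) (nat_sphere p) id g"
  obtain c where "homotopic_with_canon (\<lambda>_. True) (nat_ball p) (nat_sphere p) g (\<lambda>_. c)"
    using nullhomotopic_from_contractible[OF assms contractible_nat_ball] .
  then have "homotopic_with_canon (\<lambda>_. True) (nat_sphere p) (nat_sphere p) g (\<lambda>_. c)"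
    using homotopic_with_subset_left nat_sphere_subset_nat_ball by blast
  then have "contractible (nat_sphere p)"
    using homotopic_with_trans[OF id_g] unfolding contractible_def by blast
  then show False
    using non_contractible_space_nsphere[of p] by (simp add: nsphere_eq_top_of_nat_sphere)
qed

text \<open>A fixed point free \<open>f\<close> would give the map \<open>x \<mapsto> (x - f x) / \<parallel>x - f x\<parallel>\<close> from the ball
  to the sphere, which on the sphere is homotopic to the identity through
  \<open>x \<mapsto> (x - t f x) / \<parallel>x - t f x\<parallel>\<close>.\<close>

theorem brouwer_nat_ball:
  assumes contf: "continuous_on (nat_ball p) f" and fB: "f ` nat_ball p \<subseteq> nat_ball p"
  shows "\<exists>x\<in>nat_ball p. f x = x"
proof (rule ccontr)
  assume no_fixpoint: "\<not> ?thesis"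
  define N where "N v = (\<lambda>i. v i / sqrt (\<Sum>j\<le>p. (v j)\<^sup>2))" for v :: "nat \<Rightarrow> real"
  define d where "d t x = (\<lambda>i. x i - t * f x i)" for t and x :: "nat \<Rightarrow> real"
  have d_pos: "(\<Sum>i\<le>p. (d t x i)\<^sup>2) > 0"
    if "x \<in> nat_ball p" "t \<in> {0..1}" "t = 1 \<or> x \<in> nat_sphere p" for t x
    unfolding d_def using that fB no_fixpoint by (intro sum_sq_diff_scaled_pos) auto
  have N_d_in_sphere: "N (d t x) \<in> nat_sphere p"
    if "x \<in> nat_ball p" "t \<in> {0..1}" "t = 1 \<or> x \<in> nat_sphere p" for t x
    unfolding N_def using that fB
    by (intro nat_normalize_in_sphere d_pos) (auto simp: d_def nat_ball_def)
  have cont_f: "continuous_on S (\<lambda>z. f (snd z) i)" if "snd ` S \<subseteq> nat_ball p" for S i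
    by (rule continuous_on_product_then_coordinatewise,
        rule continuous_on_compose2[OF contf continuous_on_snd[OF continuous_on_id] that])
  define g where "g x = N (d 1 x)" for x
  have "continuous_on (nat_ball p) g"
    unfolding g_def N_def d_def
    by (intro continuous_on_nat_normalize continuous_intros
        continuous_on_product_then_coordinatewise[OF contf]
        continuous_on_product_then_coordinatewise[OF continuous_on_id] d_pos[unfolded d_def]) auto
  moreover have "g \<in> nat_ball p \<rightarrow> nat_sphere p"
    unfolding g_def using N_d_in_sphere by auto
  moreover have "homotopic_with_canon (\<lambda>_. True) (nat_sphere p) (nat_sphere p) id g"
  proof (rule homotopic_with_canon_by_homotopy)
    let ?S = "{0..1} \<times> nat_sphere p"
    show "continuous_on ?S (\<lambda>z. N (d (fst z) (snd z)))"
      unfolding N_def d_def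
      by (intro continuous_on_nat_normalize continuous_intros continuous_on_snd_coordinate cont_f
          d_pos[unfolded d_def]) (auto intro: subsetD[OF nat_sphere_subset_nat_ball])
    show "(\<lambda>z. N (d (fst z) (snd z))) ` ?S \<subseteq> nat_sphere p"
      by (auto intro!: N_d_in_sphere intro: subsetD[OF nat_sphere_subset_nat_ball])
  qed (auto simp: N_def d_def g_def nat_sphere_def)
  ultimately show False
    using not_homotopic_id_nat_sphere_ball_map by blast
qed

lemma brouwer_nat_ball_retract:
  assumes "S \<subseteq> nat_ball p" and "continuous_on (nat_ball p) r" "r ` nat_ball p \<subseteq> S"
    and "\<And>x. x \<in> S \<Longrightarrow> r x = x"
    and "continuous_on S f" "f ` S \<subseteq> S"
  shows "\<exists>x\<in>S. f x = x"
proof -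
  have "continuous_on (nat_ball p) (\<lambda>x. f (r x))"
    using continuous_on_compose2[OF assms(5) assms(2) assms(3)] .
  moreover have "(\<lambda>x. f (r x)) ` nat_ball p \<subseteq> nat_ball p"
    using assms(1,3,6) by blast
  ultimately obtain x where "x \<in> nat_ball p" "f (r x) = x"
    using brouwer_nat_ball by blast
  then show ?thesis using assms(3,4,6) by (metis image_subset_iff)
qed

definition std_simplex :: "nat \<Rightarrow> (nat \<Rightarrow> real) set" where
  "std_simplex n = {x. (\<forall>i. 0 \<le> x i) \<and> (\<Sum>i\<le>n. x i) = 1 \<and> (\<forall>i>n. x i = 0)}"

lemma std_simplex_subset_nat_ball: "std_simplex n \<subseteq> nat_ball n"
proof
  fix x assume x: "x \<in> std_simplex n"
  have "x i \<le> 1" if "i \<le> n" for i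
    using x that member_le_sum[of i "{..n}" x] by (auto simp: std_simplex_def)
  then have "(\<Sum>i\<le>n. (x i)\<^sup>2) \<le> (\<Sum>i\<le>n. x i)"
    using x by (intro sum_mono) (auto simp: std_simplex_def power2_eq_square mult_left_le)
  then show "x \<in> nat_ball n" using x by (simp add: std_simplex_def nat_ball_def)
qed

text \<open>A retraction of the whole space onto the simplex: clip to the positive orthant, fill up
  a deficit in the total mass uniformly, and rescale an excess.\<close>

definition std_simplex_retraction :: "nat \<Rightarrow> (nat \<Rightarrow> real) \<Rightarrow> nat \<Rightarrow> real" where
  "std_simplex_retraction n x i =
    (let P = (\<Sum>j\<le>n. max (x j) 0)
     in if i \<le> n then (max (x i) 0 + max 0 (1 - P) / (real n + 1)) / max 1 P else 0)"

lemma continuous_on_std_simplex_retraction: "continuous_on S (std_simplex_retraction n)"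
proof (rule continuous_on_coordinatewise_then_product)
  fix i
  have coord: "continuous_on S (\<lambda>x. x j)" for j :: nat
    by (rule continuous_on_product_then_coordinatewise[OF continuous_on_id])
  have "continuous_on S (\<lambda>x. (max (x i) 0 + max 0 (1 - (\<Sum>j\<le>n. max (x j) 0)) / (real n + 1))
      / max 1 (\<Sum>j\<le>n. max (x j) 0))"
    by (intro continuous_intros coord) (auto simp: max_def)
  then show "continuous_on S (\<lambda>x. std_simplex_retraction n x i)"
    unfolding std_simplex_retraction_def Let_def by (cases "i \<le> n") auto
qed

lemma std_simplex_retraction_in_std_simplex: "std_simplex_retraction n x \<in> std_simplex n"
proof -
  define P where "P = (\<Sum>j\<le>n. max (x j) 0)"
  have "(\<Sum>i\<le>n. max (x i) 0 + max 0 (1 - P) / (real n + 1)) = P + max 0 (1 - P)"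
    by (simp add: sum.distrib P_def add.commute)
  also have "\<dots> = max 1 P" by simp
  finally have mass: "(\<Sum>i\<le>n. max (x i) 0 + max 0 (1 - P) / (real n + 1)) / max 1 P = 1"
    by simp
  have "(\<Sum>i\<le>n. std_simplex_retraction n x i) =
      (\<Sum>i\<le>n. max (x i) 0 + max 0 (1 - P) / (real n + 1)) / max 1 P"
    by (simp add: std_simplex_retraction_def Let_def sum_divide_distrib flip: P_def)
  moreover have "0 \<le> std_simplex_retraction n x i" for i
    by (simp add: std_simplex_retraction_def Let_def)
  ultimately show ?thesis
    using mass by (simp add: std_simplex_def std_simplex_retraction_def)
qed

lemma std_simplex_retraction_id:
  assumes "x \<in> std_simplex n"
  shows "std_simplex_retraction n x = x"
proof
  fix i
  have "(\<Sum>j\<le>n. max (x j) 0) = 1" using assms by (simp add: std_simplex_def max_absorb1)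
  then show "std_simplex_retraction n x i = x i"
    using assms by (auto simp: std_simplex_retraction_def std_simplex_def max_absorb1)
qed

theorem brouwer_std_simplex:
  assumes "continuous_on (std_simplex n) f" "f ` std_simplex n \<subseteq> std_simplex n"
  shows "\<exists>x\<in>std_simplex n. f x = x"
  using brouwer_nat_ball_retract[OF std_simplex_subset_nat_ball continuous_on_std_simplex_retraction
      _ std_simplex_retraction_id assms] std_simplex_retraction_in_std_simplex by blast

lemma closed_std_simplex: "closed (std_simplex n)"
proof -
  have "std_simplex n = (\<Inter>i. {x. 0 \<le> x i}) \<inter> {x. (\<Sum>i\<le>n. x i) = 1} \<inter> (\<Inter>i\<in>{n<..}. {x. x i = 0})"
    by (auto simp: std_simplex_def)
  also have "closed \<dots>"
    by (intro closed_Int closed_INT ballI closed_Collect_le closed_Collect_eq continuous_on_sum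
        continuous_on_const continuous_on_product_coordinates)
  finally show ?thesis .
qed

lemma compact_std_simplex: "compact (std_simplex n)"
proof -
  have "compactin (powertop_real UNIV) (PiE UNIV (\<lambda>_. {0..1::real}))"
    by (simp add: compactin_PiE)
  then have "compact (PiE UNIV (\<lambda>_. {0..1::real}))"
    by (simp add: euclidean_product_topology)
  moreover have "std_simplex n \<subseteq> PiE UNIV (\<lambda>_. {0..1::real})"
  proof
    fix x assume x: "x \<in> std_simplex n"
    have "x i \<le> 1" for i
    proof (cases "i \<le> n")
      case True
      then show ?thesis using x member_le_sum[of i "{..n}" x] by (auto simp: std_simplex_def)
    qed (use x in \<open>auto simp: std_simplex_def\<close>)
    then show "x \<in> PiE UNIV (\<lambda>_. {0..1::real})" using x by (auto simp: std_simplex_def)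
  qed
  ultimately show ?thesis
    using closed_std_simplex by (metis compact_Int_closed inf.absorb_iff2)
qed

lemma normalized_in_std_simplex:
  fixes a :: "nat \<Rightarrow> real"
  assumes "\<And>j. 0 \<le> a j" "(\<Sum>j\<le>n. a j) > 0"
  shows "(\<lambda>i. if i \<le> n then a i / (\<Sum>j\<le>n. a j) else 0) \<in> std_simplex n"
proof -
  have "(\<Sum>i\<le>n. if i \<le> n then a i / (\<Sum>j\<le>n. a j) else 0) = (\<Sum>i\<le>n. a i / (\<Sum>j\<le>n. a j))"
    by simp
  also have "\<dots> = 1" using assms(2) by (simp flip: sum_divide_distrib)
  moreover have "0 \<le> (if i \<le> n then a i / (\<Sum>j\<le>n. a j) else 0)" for i
    using assms by simp
  ultimately show ?thesis by (simp add: std_simplex_def)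
qed

lemma std_simplex_combination_in_convex_hull:
  fixes w :: "nat \<Rightarrow> 'a::real_vector"
  assumes x: "x \<in> std_simplex n"
  shows "(\<Sum>j\<le>n. x j *\<^sub>R w j) \<in> convex hull (w ` {j. j \<le> n \<and> 0 < x j})"
proof -
  define J where "J = {j. j \<le> n \<and> 0 < x j}"
  have x_nonneg: "0 \<le> x j" for j using x by (simp add: std_simplex_def)
  have "(\<Sum>j\<in>J. x j) = (\<Sum>j\<le>n. x j)"
    using x_nonneg by (intro sum.mono_neutral_left) (auto simp: J_def less_le)
  then have sum_J: "(\<Sum>j\<in>J. x j) = 1"
    using x by (simp add: std_simplex_def)
  have "(\<Sum>j\<le>n. x j *\<^sub>R w j) = (\<Sum>j\<in>J. x j *\<^sub>R w j)"
    using x_nonneg by (intro sum.mono_neutral_right) (auto simp: J_def less_le)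
  also have "\<dots> \<in> convex hull (w ` J)"
    using sum_J x_nonneg
    by (intro convex_sum[OF _ convex_convex_hull]) (auto simp: J_def intro: hull_inc)
  finally show ?thesis unfolding J_def .
qed

text \<open>If no point of the simplex lay in all the \<open>B j\<close>, the distances to the \<open>B j\<close>, normalised
  to sum 1, would define a self-map of the simplex without fixed point: a point of \<open>B j\<close> with
  positive \<open>j\<close>-th coordinate is sent to one with vanishing \<open>j\<close>-th coordinate. An empty \<open>B j\<close> gets
  distance 1, as \<open>infdist x {} = 0\<close>.\<close>

theorem kkm_std_simplex:
  fixes B :: "nat \<Rightarrow> (nat \<Rightarrow> real) set"
  assumes closed: "\<And>j. j \<le> n \<Longrightarrow> closed (B j)"
    and cover: "\<And>x. x \<in> std_simplex n \<Longrightarrow> \<exists>j\<le>n. 0 < x j \<and> x \<in> B j"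
  shows "\<exists>x\<in>std_simplex n. \<forall>j\<le>n. x \<in> B j"
proof (rule ccontr)
  assume "\<not> ?thesis"
  then have outside: "\<exists>j\<le>n. x \<notin> B j" if "x \<in> std_simplex n" for x
    using that by blast
  define \<phi> where "\<phi> j x = (if B j = {} then 1 else infdist x (B j))" for j x
  have \<phi>_nonneg: "0 \<le> \<phi> j x" for j x
    by (simp add: \<phi>_def infdist_nonneg)
  have \<phi>_eq_0: "\<phi> j x = 0 \<longleftrightarrow> x \<in> B j" if "j \<le> n" for j x
    using in_closure_iff_infdist_zero[of "B j" x] closure_closed[OF closed[OF that]]
    by (auto simp: \<phi>_def)
  define \<Phi> where "\<Phi> x = (\<Sum>j\<le>n. \<phi> j x)" for x
  have \<Phi>_pos: "\<Phi> x > 0" if x: "x \<in> std_simplex n" for x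
  proof -
    obtain j where j: "j \<le> n" "x \<notin> B j" using outside[OF x] by blast
    then have "\<phi> j x > 0" using \<phi>_eq_0[of j x] \<phi>_nonneg[of j x] by linarith
    also have "\<phi> j x \<le> \<Phi> x"
      unfolding \<Phi>_def using j \<phi>_nonneg by (intro member_le_sum) auto
    finally show ?thesis .
  qed
  define f where "f x = (\<lambda>i. if i \<le> n then \<phi> i x / \<Phi> x else 0)" for x
  have "continuous_on (std_simplex n) f"
  proof (rule continuous_on_coordinatewise_then_product)
    fix i
    have "continuous_on S (\<phi> j)" for j S
      by (cases "B j = {}") (auto simp: \<phi>_def intro!: continuous_intros)
    moreover have "\<forall>x\<in>std_simplex n. (\<Sum>j\<le>n. \<phi> j x) \<noteq> 0"
      using \<Phi>_pos unfolding \<Phi>_def by fastforce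
    ultimately have "continuous_on (std_simplex n) (\<lambda>x. \<phi> i x / \<Phi> x)"
      unfolding \<Phi>_def by (intro continuous_intros)
    then show "continuous_on (std_simplex n) (\<lambda>x. f x i)"
      by (cases "i \<le> n") (auto simp: f_def)
  qed
  moreover have "f ` std_simplex n \<subseteq> std_simplex n"
  proof clarify
    fix x assume x: "x \<in> std_simplex n"
    show "f x \<in> std_simplex n"
      unfolding f_def \<Phi>_def
      by (rule normalized_in_std_simplex[OF \<phi>_nonneg \<Phi>_pos[OF x, unfolded \<Phi>_def]])
  qed
  ultimately obtain x where x: "x \<in> std_simplex n" "f x = x"
    using brouwer_std_simplex by blast
  obtain j where j: "j \<le> n" "0 < x j" "x \<in> B j"
    using cover[OF x(1)] by blast
  have "x j = \<phi> j x / \<Phi> x" using x(2) j(1) by (metis f_def)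
  also have "\<dots> = 0" using \<phi>_eq_0[OF j(1)] j(3) by simp
  finally show False using j(2) by simp
qed

lemma tvs_tendsto_add:
  fixes u v :: "'a \<Rightarrow> 'x::real_tvs"
  assumes "(u \<longlongrightarrow> c) F" "(v \<longlongrightarrow> w) F"
  shows "((\<lambda>x. u x + v x) \<longlongrightarrow> c + w) F"
proof -
  have "((\<lambda>x. (u x, v x)) \<longlongrightarrow> (c, w)) F" using assms by (rule tendsto_Pair)
  then have "filterlim (\<lambda>x. (u x, v x)) (nhds c \<times>\<^sub>F nhds w) F" by (simp add: nhds_prod)
  from filterlim_compose[OF tvs_add_continuous this] show ?thesis by simp
qed

lemma tvs_tendsto_scaleR:
  fixes v :: "'a \<Rightarrow> 'x::real_tvs"
  assumes "(a \<longlongrightarrow> c) F" "(v \<longlongrightarrow> w) F"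
  shows "((\<lambda>x. a x *\<^sub>R v x) \<longlongrightarrow> c *\<^sub>R w) F"
proof -
  have "((\<lambda>x. (a x, v x)) \<longlongrightarrow> (c, w)) F" using assms by (rule tendsto_Pair)
  then have "filterlim (\<lambda>x. (a x, v x)) (nhds c \<times>\<^sub>F nhds w) F" by (simp add: nhds_prod)
  from filterlim_compose[OF tvs_scaleR_continuous this] show ?thesis by simp
qed

lemma tvs_tendsto_sum:
  fixes f :: "'i \<Rightarrow> 'a \<Rightarrow> 'x::real_tvs"
  assumes "finite I" "\<And>i. i \<in> I \<Longrightarrow> (f i \<longlongrightarrow> l i) F"
  shows "((\<lambda>x. \<Sum>i\<in>I. f i x) \<longlongrightarrow> (\<Sum>i\<in>I. l i)) F"
  using assms by (induction I rule: finite_induct) (simp_all add: tvs_tendsto_add)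

lemma tvs_continuous_on_sum_scaleR:
  fixes w :: "'i \<Rightarrow> 'x::real_tvs"
  assumes "finite I" "\<And>i. i \<in> I \<Longrightarrow> continuous_on S (a i)"
  shows "continuous_on S (\<lambda>x. \<Sum>i\<in>I. a i x *\<^sub>R w i)"
  using assms unfolding continuous_on_def
  by (intro ballI tvs_tendsto_sum tvs_tendsto_scaleR tendsto_const) auto

lemma compactly_closedD:
  assumes "compactly_closed A" "compact C"
  shows "closedin (top_of_set C) (A \<inter> C)"
  using assms by (simp add: compactly_closed_def)

text \<open>The sets are pulled back to the standard simplex along the barycentric map
  \<open>x \<mapsto> \<Sum>j\<le>n. x j *\<^sub>R w j\<close>; its image is compact, so compact closedness of the \<open>A j\<close> is
  enough to make the preimages closed.\<close>

theorem kkm_tvs_atMost: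
  fixes w :: "nat \<Rightarrow> 'a::real_tvs" and A :: "nat \<Rightarrow> 'a set"
  assumes closed: "\<And>j. j \<le> n \<Longrightarrow> compactly_closed (A j)"
    and kkm: "\<And>J. J \<subseteq> {..n} \<Longrightarrow> J \<noteq> {} \<Longrightarrow> convex hull (w ` J) \<subseteq> (\<Union>j\<in>J. A j)"
  shows "\<exists>x. \<forall>j\<le>n. x \<in> A j"
proof -
  define h where "h x = (\<Sum>j\<le>n. x j *\<^sub>R w j)" for x
  have cont_h: "continuous_on (std_simplex n) h"
    unfolding h_def
    by (intro tvs_continuous_on_sum_scaleR continuous_on_product_then_coordinatewise[OF continuous_on_id])
      auto
  define C where "C = h ` std_simplex n"
  have "compact C"
    unfolding C_def by (intro compact_continuous_image cont_h compact_std_simplex)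
  define B where "B j = std_simplex n \<inter> h -` (A j \<inter> C)" for j
  have "closed (B j)" if "j \<le> n" for j
  proof -
    have "closedin (top_of_set C) (A j \<inter> C)"
      using compactly_closedD[OF closed[OF that] \<open>compact C\<close>] .
    moreover have "h \<in> std_simplex n \<rightarrow> C" by (auto simp: C_def)
    ultimately have "closedin (top_of_set (std_simplex n)) (B j)"
      unfolding B_def by (intro continuous_closedin_preimage_gen[OF cont_h])
    then show ?thesis using closedin_closed_trans closed_std_simplex by blast
  qed
  moreover have "\<exists>j\<le>n. 0 < x j \<and> x \<in> B j" if x: "x \<in> std_simplex n" for x
  proof -
    define J where "J = {j. j \<le> n \<and> 0 < x j}"
    have hx: "h x \<in> convex hull (w ` J)"
      unfolding h_def J_def using x by (rule std_simplex_combination_in_convex_hull)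
    then have "J \<noteq> {}" by auto
    then obtain j where "j \<in> J" "h x \<in> A j"
      using kkm[of J] hx by (auto simp: J_def)
    then show ?thesis using x by (auto simp: J_def B_def C_def)
  qed
  ultimately obtain x where "\<forall>j\<le>n. x \<in> B j"
    using kkm_std_simplex[of n B] by blast
  then show ?thesis unfolding B_def by blast
qed

corollary kkm_tvs:
  fixes w :: "'i \<Rightarrow> 'a::real_tvs" and A :: "'i \<Rightarrow> 'a set"
  assumes "finite I" and closed: "\<And>i. i \<in> I \<Longrightarrow> compactly_closed (A i)"
    and kkm: "\<And>J. J \<subseteq> I \<Longrightarrow> J \<noteq> {} \<Longrightarrow> convex hull (w ` J) \<subseteq> (\<Union>j\<in>J. A j)"
  shows "\<exists>x. \<forall>i\<in>I. x \<in> A i"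
proof (cases "I = {}")
  case False
  then obtain n where "card I = Suc n"
    using \<open>finite I\<close> by (metis card_0_eq not0_implies_Suc)
  then obtain e where e: "bij_betw e {..n} I"
    using ex_bij_betw_nat_finite[OF \<open>finite I\<close>] by (metis atLeast0LessThan lessThan_Suc_atMost)
  have "\<exists>x. \<forall>j\<le>n. x \<in> A (e j)"
  proof (rule kkm_tvs_atMost[where A = "\<lambda>j. A (e j)" and w = "\<lambda>j. w (e j)"])
    show "compactly_closed (A (e j))" if "j \<le> n" for j
      using closed e that by (auto simp: bij_betw_def)
    show "convex hull ((\<lambda>j. w (e j)) ` J) \<subseteq> (\<Union>j\<in>J. A (e j))" if "J \<subseteq> {..n}" "J \<noteq> {}" for J
      using kkm[of "e ` J"] that e by (auto simp: bij_betw_def image_comp)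
  qed
  then show ?thesis using e by (auto simp: bij_betw_def)
qed simp

lemma compact_closedin_fip:
  assumes "compact M" and closed: "\<And>i. i \<in> I \<Longrightarrow> closedin (top_of_set M) (C i)"
    and fip: "\<And>J. finite J \<Longrightarrow> J \<subseteq> I \<Longrightarrow> M \<inter> (\<Inter>i\<in>J. C i) \<noteq> {}"
  shows "M \<inter> (\<Inter>i\<in>I. C i) \<noteq> {}"
proof -
  obtain T where T: "\<And>i. i \<in> I \<Longrightarrow> closed (T i)" "\<And>i. i \<in> I \<Longrightarrow> C i = M \<inter> T i"
    using closed unfolding closedin_closed by metis
  have "M \<inter> (\<Inter>i\<in>I. T i) \<noteq> {}"
  proof (rule compact_imp_fip_image[OF \<open>compact M\<close> T(1)])
    fix J assume J: "finite J" "J \<subseteq> I"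
    have "M \<inter> (\<Inter>i\<in>J. C i) \<subseteq> M \<inter> (\<Inter>i\<in>J. T i)" using J(2) T(2) by auto
    then show "M \<inter> (\<Inter>i\<in>J. T i) \<noteq> {}" using fip[OF J] by blast
  qed
  moreover have "M \<inter> (\<Inter>i\<in>I. T i) \<subseteq> M \<inter> (\<Inter>i\<in>I. C i)" using T(2) by auto
  ultimately show ?thesis by blast
qed

lemma KKM_type_convex_hull_subset:
  assumes "convex D" "KKM_type G D"
    and "finite J" "J \<noteq> {}" "z ` J \<subseteq> D"
    and GA: "\<And>y x. y \<in> J \<Longrightarrow> x \<in> D \<Longrightarrow> 0 \<in> G (z y) x \<Longrightarrow> x \<in> A y"
  shows "convex hull (z ` J) \<subseteq> (\<Union>y\<in>J. A y)"
proof
  fix x assume x: "x \<in> convex hull (z ` J)"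
  then have "x \<in> D" using hull_minimal[of "z ` J" D convex] assms(1,5) by blast
  then have "\<exists>xj\<in>z ` J. 0 \<in> G xj x"
    using assms(2-5) x unfolding KKM_type_def by blast
  then show "x \<in> (\<Union>y\<in>J. A y)" using GA \<open>x \<in> D\<close> by blast
qed

theorem corollary2p4:
  fixes D :: "'x::real_tvs set" and K :: "'k set"
    and F :: "'x \<Rightarrow> 'k \<Rightarrow> 'y::real_tvs set"
    and G :: "'x \<Rightarrow> 'x \<Rightarrow> 'y set"
    and M :: "'x set" and y0 :: 'k
  assumes "D \<noteq> {}" and "convex D" and "K \<noteq> {}"
    and i: "\<forall>y\<in>K. compactly_closed {x\<in>D. 0 \<in> F x y}"
    and ii: "KKM_type G D"
    and iii: "\<forall>y\<in>K. \<exists>z\<in>D. \<forall>x\<in>D. 0 \<in> G z x \<longrightarrow> 0 \<in> F x y"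
    and iv: "M \<noteq> {}" "compact M" "M \<subseteq> D" "y0 \<in> K" "\<forall>x\<in>D - M. 0 \<notin> F x y0"
  shows "\<exists>xb\<in>M. \<forall>y\<in>K. 0 \<in> F xb y"
proof -
  define A where "A y = {x\<in>D. 0 \<in> F x y}" for y
  obtain z where "\<And>y. y \<in> K \<Longrightarrow> z y \<in> D"
    and "\<And>y x. y \<in> K \<Longrightarrow> x \<in> D \<Longrightarrow> 0 \<in> G (z y) x \<Longrightarrow> 0 \<in> F x y"
    using iii by metis
  then have finite_inter: "\<exists>x. \<forall>y\<in>J. x \<in> A y" if "finite J" "J \<subseteq> K" for J
    using that i \<open>convex D\<close> ii finite_subset[OF _ \<open>finite J\<close>]
    by (intro kkm_tvs[where w = z] KKM_type_convex_hull_subset[where G = G and D = D])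
      (auto simp: A_def)
  have "M \<inter> (\<Inter>y\<in>K. A y \<inter> M) \<noteq> {}"
  proof (rule compact_closedin_fip[OF iv(2)])
    show "closedin (top_of_set M) (A y \<inter> M)" if "y \<in> K" for y
      using compactly_closedD[OF _ iv(2)] i that unfolding A_def by blast
    fix J assume J: "finite J" "J \<subseteq> K"
    then obtain x where x: "\<forall>y\<in>insert y0 J. x \<in> A y"
      using finite_inter[of "insert y0 J"] iv(4) by auto
    then have "x \<in> M" using iv(5) by (auto simp: A_def)
    then show "M \<inter> (\<Inter>y\<in>J. A y \<inter> M) \<noteq> {}" using x by blast
  qed
  then obtain xb where "xb \<in> M" "\<And>y. y \<in> K \<Longrightarrow> xb \<in> A y" by blast
  then show ?thesis by (auto simp: A_def)
qed

end
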